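(* Let $\mathsf{T}\ge2$ and $\mathsf{M}\ge1$ be integers, and let $\zeta_1(n),\zeta_2(n)$ be strictly positive sequences with $\lim_{n\to\infty}\zeta_1(n)/\zeta_2(n)=\lim_{n\to\infty}\zeta_2(n)=\lim_{n\to\infty}\zeta_2(n)^{\mathsf{T}/(\mathsf{T}-1)}/\zeta_1(n)=0$. For real $A_i,R_i,S_{i,t}$ ($i\in[\mathsf{M}]$, $t\in[\mathsf{T}-1]$) define $$p(x)=\prod_{i=1}^{\mathsf{M}}\Big((A_i+R_i)+\zeta_2(n)\sum_{t=1}^{\mathsf{T}-1}S_{i,t}x^t+\zeta_1(n)R_ix^{\mathsf{T}}\Big)=\sum_{k=0}^{\mathsf{M}\mathsf{T}}c_kx^k,$$ and for $\ell=0,\dots,\mathsf{M}-1$ let $C_\ell=\sum_{\mathcal{S}\subseteq[\mathsf{M}],|\mathcal{S}|=\ell}\big(\prod_{i\in\mathcal{S}}R_i\big)\big(\prod_{l\notin\mathcal{S}}(A_l+R_l)\big)$. Then for each $\ell=0,1,\dots,\mathsf{M}-1$, $$c_{\ell\mathsf{T}}=\zeta_1(n)^\ell C_\ell+o\big(\zeta_1(n)^\ell\big)\quad\text{as }n\to\infty,$$ with $A_i,R_i,S_{i,t}$ held fixed (not depending on $n$).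
   Context: $[\mathsf{M}]=\{1,\dots,\mathsf{M}\}$; empty products equal $1$. The coefficients $c_k$ depend on $n$ through $\zeta_1(n),\zeta_2(n)$. *)

theory Defs
  imports "HOL-Computational_Algebra.Polynomial" "HOL-Library.Landau_Symbols"
begin

definition pfac :: "nat \<Rightarrow> nat \<Rightarrow> (nat \<Rightarrow> real) \<Rightarrow> (nat \<Rightarrow> real) \<Rightarrow> (nat \<Rightarrow> nat \<Rightarrow> real)
    \<Rightarrow> real \<Rightarrow> real \<Rightarrow> real poly" where
  "pfac M T A R S z1 z2 =
     (\<Prod>i\<in>{1..M}. [:A i + R i:]
        + smult z2 (\<Sum>t\<in>{1..T-1}. monom (S i t) t)
        + monom (z1 * R i) T)"

definition Ccoef :: "nat \<Rightarrow> (nat \<Rightarrow> real) \<Rightarrow> (nat \<Rightarrow> real) \<Rightarrow> nat \<Rightarrow> real" where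
  "Ccoef M A R l =
     (\<Sum>S\<in>{S. S \<subseteq> {1..M} \<and> card S = l}.
        (\<Prod>i\<in>S. R i) * (\<Prod>j\<in>{1..M} - S. A j + R j))"

end

theory Submission
  imports Defs
begin

(* Substituting x = \<zeta>1(n) powr (-1/T) * y multiplies c_k by \<zeta>1(n) powr (-k/T). In the i-th factor
   this turns \<zeta>1 R_i x^T into R_i y^T and \<zeta>2 S_{i,t} x^t into (\<zeta>2 / \<zeta>1 powr (t/T)) S_{i,t} y^t,
   which tends to 0 because \<zeta>2 = o(\<zeta>1 powr ((T-1)/T)) and \<zeta>1 \<rightarrow> 0. So the rescaled polynomial
   converges coefficientwise to the product of (A_i + R_i) + R_i y^T, whose coefficient of y^(l T)
   is C_l; that is, c_(l T) / \<zeta>1^l \<rightarrow> C_l. *)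

lemma prod_monom:
  fixes r :: "'b \<Rightarrow> 'a::comm_semiring_1"
  assumes "finite I"
  shows "(\<Prod>i\<in>I. monom (r i) k) = monom (\<Prod>i\<in>I. r i) (k * card I)"
  using assms by (induction I rule: finite_induct) (simp_all add: mult_monom)

lemma coeff_prod_const_plus_monom:
  fixes a r :: "'b \<Rightarrow> 'a::comm_semiring_1"
  assumes "finite I" and "k > 0"
  shows "coeff (\<Prod>i\<in>I. [:a i:] + monom (r i) k) (l * k)
           = (\<Sum>S | S \<subseteq> I \<and> card S = l. (\<Prod>i\<in>S. r i) * (\<Prod>i\<in>I - S. a i))"
proof -
  have "(\<Prod>i\<in>I. [:a i:] + monom (r i) k)
          = (\<Sum>S\<in>Pow I. (\<Prod>i\<in>S. monom (r i) k) * (\<Prod>i\<in>I - S. [:a i:]))"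
    by (subst prod_add[OF assms(1), symmetric]) (simp add: add.commute)
  also have "\<dots> = (\<Sum>S\<in>Pow I. monom ((\<Prod>i\<in>S. r i) * (\<Prod>i\<in>I - S. a i)) (k * card S))"
    using assms(1) by (intro sum.cong refl)
      (auto simp: prod_monom finite_subset mult_monom simp flip: monom_0)
  finally have "coeff (\<Prod>i\<in>I. [:a i:] + monom (r i) k) (l * k)
      = (\<Sum>S\<in>Pow I. if card S = l then (\<Prod>i\<in>S. r i) * (\<Prod>i\<in>I - S. a i) else 0)"
    using assms(2) by (simp add: coeff_sum)
  also have "\<dots> = (\<Sum>S | S \<subseteq> I \<and> card S = l. (\<Prod>i\<in>S. r i) * (\<Prod>i\<in>I - S. a i))"
    using assms(1) by (simp add: sum.inter_filter[symmetric] Pow_def)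
  finally show ?thesis .
qed

lemma tendsto_coeff_prod:
  fixes f :: "'x \<Rightarrow> 'i \<Rightarrow> 'a::{comm_semiring_1, topological_semigroup_mult, topological_comm_monoid_add} poly"
  assumes "finite I"
    and "\<And>i k. i \<in> I \<Longrightarrow> ((\<lambda>x. coeff (f x i) k) \<longlongrightarrow> coeff (g i) k) F"
  shows "((\<lambda>x. coeff (\<Prod>i\<in>I. f x i) k) \<longlongrightarrow> coeff (\<Prod>i\<in>I. g i) k) F"
  using assms
proof (induction I arbitrary: k rule: finite_induct)
  case (insert i I)
  then show ?case
    by (simp add: coeff_mult) (intro tendsto_sum tendsto_mult; simp)
qed simp

lemma tendsto_div_powr_frac_zero:
  fixes u w :: "'x \<Rightarrow> real"
  assumes u_pos: "\<And>x. u x > 0" and w_pos: "\<And>x. w x > 0"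
    and "((\<lambda>x. u x / w x) \<longlongrightarrow> 0) F" and "(w \<longlongrightarrow> 0) F"
    and "((\<lambda>x. w x powr (real T / (real T - 1)) / u x) \<longlongrightarrow> 0) F"
    and "0 < t" and "t < T"
  shows "((\<lambda>x. w x / u x powr (real t / real T)) \<longlongrightarrow> 0) F"
proof -
  define e where "e = (real T - 1) / real T"
  have "e > 0" and e_inv: "real T * e / (real T - 1) = 1"
    using \<open>0 < t\<close> \<open>t < T\<close> by (simp_all add: e_def)
  have "((\<lambda>x. (w x powr (real T / (real T - 1)) / u x) powr e) \<longlongrightarrow> 0) F"
    using assms(5) \<open>e > 0\<close>
    by (intro tendsto_zero_powrI tendsto_const always_eventually allI)
      (simp_all add: less_imp_le[OF u_pos])
  moreover have "(w x powr (real T / (real T - 1)) / u x) powr e = w x / u x powr e" for x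
    using u_pos[of x] w_pos[of x] by (simp add: powr_divide powr_powr e_inv less_imp_le)
  ultimately have w_over_u_e: "((\<lambda>x. w x / u x powr e) \<longlongrightarrow> 0) F"
    by simp
  have "((\<lambda>x. u x / w x * w x) \<longlongrightarrow> 0 * 0) F"
    using assms(3,4) by (rule tendsto_mult)
  then have u_to_0: "(u \<longlongrightarrow> 0) F"
    using w_pos by (simp add: less_imp_neq[OF w_pos, symmetric])
  have "((\<lambda>x. u x powr (e - real t / real T)) \<longlongrightarrow> (if t = T - 1 then 1 else 0)) F"
  proof (cases "t = T - 1")
    case True
    then have "e - real t / real T = 0"
      using \<open>t < T\<close> by (simp add: e_def of_nat_diff diff_divide_distrib)
    then show ?thesis
      using True by (simp add: less_imp_neq[OF u_pos, symmetric])
  next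
    case False
    then have "real t < real T - 1"
      using \<open>t < T\<close> by linarith
    then have "e - real t / real T > 0"
      unfolding e_def by (simp add: divide_strict_right_mono)
    then have "((\<lambda>x. u x powr (e - real t / real T)) \<longlongrightarrow> 0) F"
      by (intro tendsto_zero_powrI[OF u_to_0 tendsto_const] always_eventually allI)
        (simp_all add: less_imp_le[OF u_pos])
    with False show ?thesis
      by simp
  qed
  then have "((\<lambda>x. w x / u x powr e * u x powr (e - real t / real T))
               \<longlongrightarrow> 0 * (if t = T - 1 then 1 else 0)) F"
    using w_over_u_e by (intro tendsto_mult)
  moreover have "w x / u x powr e * u x powr (e - real t / real T) = w x / u x powr (real t / real T)" for x
    using u_pos[of x] by (simp add: powr_diff)
  ultimately show ?thesis by simp
qed

lemma tendsto_coeff_rescaled_factor: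
  fixes u w :: "'x \<Rightarrow> real"
  assumes "T > 0" and u_pos: "\<And>x. u x > 0"
    and w_small: "\<And>t. 0 < t \<Longrightarrow> t < T \<Longrightarrow> ((\<lambda>x. w x / u x powr (real t / real T)) \<longlongrightarrow> 0) F"
  shows "((\<lambda>x. coeff (([:a:] + smult (w x) (\<Sum>t\<in>{1..T-1}. monom (s t) t) + monom (u x * r) T)
                              \<circ>\<^sub>p [:0, u x powr (-1 / T):]) k)
           \<longlongrightarrow> coeff ([:a:] + monom r T) k) F"
proof -
  have "coeff (([:a:] + smult (w x) (\<Sum>t\<in>{1..T-1}. monom (s t) t) + monom (u x * r) T)
                 \<circ>\<^sub>p [:0, u x powr (-1 / T):]) k
      = ((if k = 0 then a else 0) + (if 0 < k \<and> k < T then w x * s k else 0)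
          + (if k = T then u x * r else 0)) / u x powr (k / T)" for x
  proof -
    have "(u x powr (-1 / T)) ^ k = u x powr (- (k / T))"
      using u_pos[of x] by (subst powr_power) auto
    then show ?thesis
      using \<open>T > 0\<close> u_pos[of x]
      by (simp add: coeff_pcompose_linear coeff_sum coeff_pCons powr_minus_divide split: nat.split)
  qed
  moreover have "((\<lambda>x. ((if k = 0 then a else 0) + (if 0 < k \<and> k < T then w x * s k else 0)
          + (if k = T then u x * r else 0)) / u x powr (k / T)) \<longlongrightarrow> coeff ([:a:] + monom r T) k) F"
  proof -
    consider "k = 0" | "0 < k" "k < T" | "k = T" | "T < k"
      by linarith
    then show ?thesis
    proof cases
      case 2
      have "((\<lambda>x. s k * (w x / u x powr (k / T))) \<longlongrightarrow> 0) F"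
        by (rule tendsto_mult_right_zero[OF w_small[OF 2]])
      then show ?thesis
        using 2 by (simp add: coeff_pCons' mult.commute)
    qed (use \<open>T > 0\<close> in \<open>simp_all add: coeff_pCons' less_imp_neq[OF u_pos, symmetric]
                                        abs_of_pos[OF u_pos]\<close>)
  qed
  ultimately show ?thesis by simp
qed

theorem lemma8:
  fixes T M :: nat and \<zeta>1 \<zeta>2 :: "nat \<Rightarrow> real"
    and A R :: "nat \<Rightarrow> real" and S :: "nat \<Rightarrow> nat \<Rightarrow> real" and l :: nat
  assumes "T \<ge> 2" and "M \<ge> 1"
    and "\<And>n. \<zeta>1 n > 0" and "\<And>n. \<zeta>2 n > 0"
    and "(\<lambda>n. \<zeta>1 n / \<zeta>2 n) \<longlonglongrightarrow> 0"
    and "\<zeta>2 \<longlonglongrightarrow> 0"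
    and "(\<lambda>n. \<zeta>2 n powr (real T / (real T - 1)) / \<zeta>1 n) \<longlonglongrightarrow> 0"
    and "l \<le> M - 1"
  shows "(\<lambda>n. coeff (pfac M T A R S (\<zeta>1 n) (\<zeta>2 n)) (l * T) - \<zeta>1 n ^ l * Ccoef M A R l)
           \<in> o[sequentially](\<lambda>n. \<zeta>1 n ^ l)"
proof -
  let ?p = "\<lambda>n. pfac M T A R S (\<zeta>1 n) (\<zeta>2 n)"
  have rescaled: "coeff (?p n \<circ>\<^sub>p [:0, \<zeta>1 n powr (-1 / T):]) (l * T)
                   = coeff (?p n) (l * T) / \<zeta>1 n ^ l" for n
  proof -
    have "(\<zeta>1 n powr (-1 / T)) ^ (l * T) = \<zeta>1 n powr (- real l)"
      using assms(1) assms(3)[of n] by (subst powr_power) auto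
    then show ?thesis
      using assms(3) by (simp add: coeff_pcompose_linear powr_minus_divide powr_realpow)
  qed
  have "((\<lambda>n. coeff (?p n \<circ>\<^sub>p [:0, \<zeta>1 n powr (-1 / T):]) (l * T))
          \<longlonglongrightarrow> coeff (\<Prod>i\<in>{1..M}. [:A i + R i:] + monom (R i) T) (l * T))"
    unfolding pfac_def pcompose_prod
    by (intro tendsto_coeff_prod tendsto_coeff_rescaled_factor tendsto_div_powr_frac_zero)
      (use assms in auto)
  also have "coeff (\<Prod>i\<in>{1..M}. [:A i + R i:] + monom (R i) T) (l * T) = Ccoef M A R l"
    using assms(1) by (simp add: Ccoef_def coeff_prod_const_plus_monom)
  finally have "(\<lambda>n. coeff (?p n) (l * T) / \<zeta>1 n ^ l) \<longlonglongrightarrow> Ccoef M A R l"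
    by (simp only: rescaled)
  then have "(\<lambda>n. coeff (?p n) (l * T) / \<zeta>1 n ^ l - Ccoef M A R l)
               \<longlonglongrightarrow> Ccoef M A R l - Ccoef M A R l"
    by (intro tendsto_diff tendsto_const)
  then have "(\<lambda>n. (coeff (?p n) (l * T) - \<zeta>1 n ^ l * Ccoef M A R l) / \<zeta>1 n ^ l) \<longlonglongrightarrow> 0"
    using assms(3) by (simp add: diff_divide_distrib less_imp_neq[symmetric])
  then show ?thesis
    using assms(3) by (intro smalloI_tendsto) (simp_all add: less_imp_neq[symmetric])
qed

end
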